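(* $\mathbf{PL}<^{\mathrm{fin}}_{\mathrm{Learn}}E_{set}$: every finite $\mathbf{PL}$-learnable family of structures is $E_{set}$-learnable, and there is a finite family that is $E_{set}$-learnable but not $\mathbf{PL}$-learnable.
   Context: All structures are countable, have domain $\mathbb{N}$, are in a finite relational signature, and are identified with their atomic diagrams (elements of $2^{\mathbb{N}}$). A family of structures $\mathfrak{K}$ is a countable set of pairwise nonisomorphic such structures; $\mathcal{S}\restriction_s$ is the finite substructure on $\{0,\dots,s\}$; $\mathrm{LD}(\mathfrak{K})\subseteq2^{\mathbb{N}}$ is the set of structures with domain $\mathbb{N}$ isomorphic to a member of $\mathfrak{K}$ (subspace topology). For an equivalence relation $E$ on a space $X$, $\mathfrak{K}$ is $E$-learnable if there is a continuous $\Gamma:\mathrm{LD}(\mathfrak{K})\to X$ with $\mathcal{S}\cong\mathcal{S}'\iff\Gamma(\mathcal{S})E\Gamma(\mathcal{S}')$ on $\mathrm{LD}(\mathfrak{K})$. Fix a computable bijection $\langle\cdot,\cdot\rangle:\mathbb{N}^2\to\mathbb{N}$; for $p\in\mathbb{N}^{\mathbb{N}\times\mathbb{N}}$ let $p^{[m]}(n)=p(\langle m,n\rangle)$; $p\,E_{set}\,q\iff\{p^{[m]}:m\in\mathbb{N}\}=\{q^{[m]}:m\in\mathbb{N}\}$. A learner is an arbitrary function from $\{\mathcal{S}\restriction_s:\mathcal{S}\in\mathrm{LD}(\mathfrak{K})\}$ to $\{\ulcorner\mathcal{A}\urcorner:\mathcal{A}\in\mathfrak{K}\}\cup\{?\}$.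 $\mathfrak{K}$ is $\mathbf{PL}$-learnable if some learner $\mathbf{M}$ satisfies: for every $\mathcal{S}\in\mathrm{LD}(\mathfrak{K})$ and $\mathcal{A}\in\mathfrak{K}$, $\{n:\mathbf{M}(\mathcal{S}\restriction_n)=\ulcorner\mathcal{A}\urcorner\}$ is infinite iff $\mathcal{A}\cong\mathcal{S}$. $X\leq^{\mathrm{fin}}_{\mathrm{Learn}}Y$ means every finite $X$-learnable family is $Y$-learnable; $<^{\mathrm{fin}}_{\mathrm{Learn}}$ means $\leq^{\mathrm{fin}}_{\mathrm{Learn}}$ but not the converse. *)

theory Defs
  imports "HOL-Analysis.Analysis" "HOL-Library.Nat_Bijection"
begin

text \<open>A finite relational signature is given by the list of arities of its relation
symbols.  A structure with domain nat is identified with its atomic diagram, i.e. the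
characteristic function of the set of true atomic facts (i, xs) meaning R_i(xs).
(Equality atoms are constant and therefore omitted.)\<close>

type_synonym struc = "nat \<times> nat list \<Rightarrow> bool"

definition is_struc :: "nat list \<Rightarrow> struc \<Rightarrow> bool" where
  "is_struc sig S \<longleftrightarrow> (\<forall>i xs. S (i, xs) \<longrightarrow> i < length sig \<and> length xs = sig ! i)"

definition iso :: "struc \<Rightarrow> struc \<Rightarrow> bool" where
  "iso S T \<longleftrightarrow> (\<exists>f::nat \<Rightarrow> nat. bij f \<and> (\<forall>i xs. S (i, xs) = T (i, map f xs)))"

definition restr :: "struc \<Rightarrow> nat \<Rightarrow> struc" where
  "restr S s = (\<lambda>(i, xs). S (i, xs) \<and> set xs \<subseteq> {0..s})"

definition family :: "nat list \<Rightarrow> struc set \<Rightarrow> bool" where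
  "family sig K \<longleftrightarrow> countable K \<and> (\<forall>A\<in>K. is_struc sig A) \<and>
     (\<forall>A\<in>K. \<forall>B\<in>K. iso A B \<longrightarrow> A = B)"

definition LD :: "nat list \<Rightarrow> struc set \<Rightarrow> struc set" where
  "LD sig K = {S. is_struc sig S \<and> (\<exists>A\<in>K. iso S A)}"

definition cantor_top :: "struc topology" where
  "cantor_top = product_topology (\<lambda>_. discrete_topology UNIV) UNIV"

definition baire_top :: "(nat \<Rightarrow> nat) topology" where
  "baire_top = product_topology (\<lambda>_. discrete_topology UNIV) UNIV"

definition E_set :: "(nat \<Rightarrow> nat) \<Rightarrow> (nat \<Rightarrow> nat) \<Rightarrow> bool" where
  "E_set p q \<longleftrightarrow> range (\<lambda>m. \<lambda>n. p (prod_encode (m, n))) = range (\<lambda>m. \<lambda>n. q (prod_encode (m, n)))"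

definition Eset_learnable :: "nat list \<Rightarrow> struc set \<Rightarrow> bool" where
  "Eset_learnable sig K \<longleftrightarrow> (\<exists>\<Gamma>.
     continuous_map (subtopology cantor_top (LD sig K)) baire_top \<Gamma> \<and>
     (\<forall>S\<in>LD sig K. \<forall>S'\<in>LD sig K. iso S S' \<longleftrightarrow> E_set (\<Gamma> S) (\<Gamma> S')))"

text \<open>Learner: outputs Some A (the code of A \<in> K) or None (the answer ?).\<close>
definition PL_learnable :: "nat list \<Rightarrow> struc set \<Rightarrow> bool" where
  "PL_learnable sig K \<longleftrightarrow> (\<exists>M :: struc \<Rightarrow> struc option.
     (\<forall>S\<in>LD sig K. \<forall>n. M (restr S n) \<in> Some ` K \<union> {None}) \<and>
     (\<forall>S\<in>LD sig K. \<forall>A\<in>K. infinite {n. M (restr S n) = Some A} \<longleftrightarrow> iso A S))"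

end

theory Submission
  imports Defs
begin

(* A countable family of invariants, each of the form \<exists>s \<forall>t. \<not> Q s t with Q depending on
   finitely many atoms, reduces continuously to E_set: for every invariant i the code lists all
   step functions tagged i, plus the constant function tagged i exactly when invariant i holds.

   If a learner M PL-learns K = {A_0, A_1, ...}, then S is not isomorphic to A_i iff M outputs A_i
   only finitely often on S, i.e. iff \<exists>s \<forall>t > s. M (S|t) \<noteq> A_i; these invariants determine the
   isomorphism type, so K is E_set-learnable.

   The family {\<omega>, \<zeta>} is E_set-learnable, as having a least element is such an invariant.
   It is not PL-learnable: list N \<subseteq> nat in reverse on the negative integers and the rest of nat
   on the nonnegative integers. This gives a copy of \<omega> when N is finite and of \<zeta> when N is
   infinite and coinfinite, and its restriction to {0..n} depends only on N \<inter> {0..n}. A learner must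
   guess \<omega> infinitely often on each finite N; extending N by finite steps, each one past a new
   guess of \<omega>, yields a copy of \<zeta> on which it guesses \<omega> infinitely often. *)

lemma iso_sym: "iso S T \<Longrightarrow> iso T S"
proof -
  assume "iso S T"
  then obtain f where f: "bij f" "\<forall>i xs. S (i, xs) = T (i, map f xs)"
    unfolding iso_def by blast
  have "T (i, ys) = S (i, map (inv f) ys)" for i ys
    using f by (simp add: bij_is_surj surj_f_inv_f map_idI)
  then show "iso T S"
    unfolding iso_def using bij_imp_bij_inv[OF f(1)] by blast
qed

lemma iso_trans: "iso S T \<Longrightarrow> iso T U \<Longrightarrow> iso S U"
proof -
  assume "iso S T" "iso T U"
  then obtain f g where "bij f" "\<forall>i xs. S (i, xs) = T (i, map f xs)"
    and "bij g" "\<forall>i xs. T (i, xs) = U (i, map g xs)"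
    unfolding iso_def by blast
  then show "iso S U"
    unfolding iso_def by (intro exI[of _ "g \<circ> f"]) (simp add: bij_comp)
qed

definition finitely_determined :: "('a \<Rightarrow> 'b) set \<Rightarrow> (('a \<Rightarrow> 'b) \<Rightarrow> 'c) \<Rightarrow> bool" where
  "finitely_determined X f \<longleftrightarrow>
     (\<exists>F. finite F \<and> (\<forall>S\<in>X. \<forall>S'\<in>X. (\<forall>a\<in>F. S a = S' a) \<longrightarrow> f S = f S'))"

lemma finitely_determined_comp:
  "finitely_determined X f \<Longrightarrow> finitely_determined X (\<lambda>S. g (f S))"
  unfolding finitely_determined_def by (blast intro: arg_cong[of _ _ g])

lemma finitely_determined_subset:
  "finitely_determined Y f \<Longrightarrow> X \<subseteq> Y \<Longrightarrow> finitely_determined X f"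
  unfolding finitely_determined_def by (meson subsetD)

lemma finitely_determined_bounded_ex:
  fixes P :: "nat \<Rightarrow> ('a \<Rightarrow> 'b) \<Rightarrow> bool"
  assumes "\<And>t. finitely_determined X (P t)"
  shows "finitely_determined X (\<lambda>S. \<exists>t\<le>n. P t S)"
proof -
  have "\<forall>t. \<exists>F. finite F \<and> (\<forall>S\<in>X. \<forall>S'\<in>X. (\<forall>a\<in>F. S a = S' a) \<longrightarrow> P t S = P t S')"
    using assms unfolding finitely_determined_def by blast
  then obtain F where F: "\<forall>t. finite (F t) \<and>
      (\<forall>S\<in>X. \<forall>S'\<in>X. (\<forall>a\<in>F t. S a = S' a) \<longrightarrow> P t S = P t S')"
    unfolding choice_iff by (elim exE)
  have "\<forall>S\<in>X. \<forall>S'\<in>X. (\<forall>a\<in>(\<Union>t\<le>n. F t). S a = S' a) \<longrightarrow> (\<exists>t\<le>n. P t S) = (\<exists>t\<le>n. P t S')"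
  proof (intro ballI impI)
    fix S S' assume S: "S \<in> X" "S' \<in> X" and agree: "\<forall>a\<in>(\<Union>t\<le>n. F t). S a = S' a"
    have "P t S = P t S'" if "t \<le> n" for t
    proof -
      have "\<forall>a\<in>F t. S a = S' a"
        using agree that by blast
      then show ?thesis
        using F S by blast
    qed
    then show "(\<exists>t\<le>n. P t S) = (\<exists>t\<le>n. P t S')"
      by blast
  qed
  moreover have "finite (\<Union>t\<le>n. F t)"
    using F by simp
  ultimately show ?thesis
    unfolding finitely_determined_def by (intro exI conjI)
qed

lemma topspace_cantor_top [simp]: "topspace cantor_top = UNIV"
  unfolding cantor_top_def by (auto simp: PiE_def extensional_def)

lemma openin_cantor_cylinder:
  assumes "finite F"
  shows "openin cantor_top {S. \<forall>a\<in>F. S a = S0 a}"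
  using assms
proof (induction F rule: finite_induct)
  case empty
  then show ?case
    using openin_topspace[of cantor_top] by simp
next
  case (insert a F)
  have "continuous_map cantor_top (discrete_topology UNIV) (\<lambda>S. S a)"
    unfolding cantor_top_def by (rule continuous_map_product_projection) simp
  then have "openin cantor_top {S. S a = S0 a}"
    using openin_continuous_map_preimage[of cantor_top _ "\<lambda>S. S a" "{S0 a}"] by simp
  moreover have "{S. \<forall>b\<in>insert a F. S b = S0 b} = {S. S a = S0 a} \<inter> {S. \<forall>b\<in>F. S b = S0 b}"
    by auto
  ultimately show ?case
    using insert.IH by auto
qed

lemma continuous_map_cantor_baire:
  assumes "\<And>p. finitely_determined X (\<lambda>S. G S p)"
  shows "continuous_map (subtopology cantor_top X) baire_top G"
proof -
  have "continuous_map (subtopology cantor_top X) (discrete_topology UNIV) (\<lambda>S. G S p)" for p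
  proof -
    obtain F where F: "finite F"
      "\<forall>S\<in>X. \<forall>S'\<in>X. (\<forall>a\<in>F. S a = S' a) \<longrightarrow> G S p = G S' p"
      using assms[of p] unfolding finitely_determined_def by blast
    have "openin (subtopology cantor_top X) {S \<in> X. G S p \<in> U}" for U
    proof -
      let ?C = "\<Union>S0\<in>{S \<in> X. G S p \<in> U}. {S. \<forall>a\<in>F. S a = S0 a}"
      have "?C \<inter> X \<subseteq> {S \<in> X. G S p \<in> U}"
      proof
        fix S assume "S \<in> ?C \<inter> X"
        then obtain S0 where "S0 \<in> X" "G S0 p \<in> U" "\<forall>a\<in>F. S a = S0 a" "S \<in> X"
          by blast
        then show "S \<in> {S \<in> X. G S p \<in> U}"
          using F(2)[rule_format, of S S0] by simp
      qed
      then have "{S \<in> X. G S p \<in> U} = ?C \<inter> X"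
        by blast
      moreover have "openin cantor_top ?C"
        using openin_cantor_cylinder[OF F(1)] by (intro openin_Union) blast
      ultimately show ?thesis
        unfolding openin_subtopology by blast
    qed
    then show ?thesis
      by (simp add: continuous_map_def)
  qed
  then show ?thesis
    unfolding baire_top_def by (simp add: continuous_map_componentwise_UNIV)
qed

(* Column (i, 2j) is the step function at j. Column (i, 2s + 1) flips to 1 once a witness t of
   Q i s t S has appeared, so it is a step function as well, unless no such t exists and it is
   the constant 0. *)
definition sigma2_column :: "(nat \<Rightarrow> nat \<Rightarrow> nat \<Rightarrow> 'a \<Rightarrow> bool) \<Rightarrow> 'a \<Rightarrow> nat \<Rightarrow> nat \<Rightarrow> nat \<Rightarrow> nat" where
  "sigma2_column Q S i x n = prod_encode (i,
     if even x then (if x div 2 \<le> n then 1 else 0)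
     else if \<exists>t\<le>n. Q i (x div 2) t S then 1 else 0)"

definition sigma2_code :: "(nat \<Rightarrow> nat \<Rightarrow> nat \<Rightarrow> 'a \<Rightarrow> bool) \<Rightarrow> 'a \<Rightarrow> nat \<Rightarrow> nat" where
  "sigma2_code Q S p =
     (case prod_decode p of (m, n) \<Rightarrow> case prod_decode m of (i, x) \<Rightarrow> sigma2_column Q S i x n)"

lemma columns_sigma2_code:
  "range (\<lambda>m n. sigma2_code Q S (prod_encode (m, n))) = range (case_prod (sigma2_column Q S))"
proof -
  have "(\<lambda>m n. sigma2_code Q S (prod_encode (m, n))) = case_prod (sigma2_column Q S) \<circ> prod_decode"
    by (simp add: sigma2_code_def fun_eq_iff split: prod.split)
  then show ?thesis
    using surj_prod_decode by (metis image_comp)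
qed

lemma range_sigma2_column:
  "range (case_prod (sigma2_column Q S)) =
     {\<lambda>n. prod_encode (i, if j \<le> n then 1 else 0) | i j. True} \<union>
     {\<lambda>n. prod_encode (i, 0) | i. \<exists>s. \<forall>t. \<not> Q i s t S}"
  (is "_ = ?Step \<union> ?Zero")
proof (intro equalityI subsetI)
  fix c assume "c \<in> range (case_prod (sigma2_column Q S))"
  then obtain i x where c: "c = sigma2_column Q S i x"
    by auto
  show "c \<in> ?Step \<union> ?Zero"
  proof (cases "even x")
    case True
    then have "c = (\<lambda>n. prod_encode (i, if x div 2 \<le> n then 1 else 0))"
      unfolding c sigma2_column_def by simp
    then show ?thesis
      by blast
  next
    case odd: False
    show ?thesis
    proof (cases "\<exists>t. Q i (x div 2) t S")
      case True
      define t0 where "t0 = (LEAST t. Q i (x div 2) t S)"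
      have "(\<exists>t\<le>n. Q i (x div 2) t S) \<longleftrightarrow> t0 \<le> n" for n
        using True unfolding t0_def by (metis LeastI Least_le le_trans)
      then have "c = (\<lambda>n. prod_encode (i, if t0 \<le> n then 1 else 0))"
        unfolding c sigma2_column_def using odd by simp
      then show ?thesis
        by blast
    next
      case False
      then have "c = (\<lambda>n. prod_encode (i, 0))"
        unfolding c sigma2_column_def using odd by simp
      then show ?thesis
        using False by blast
    qed
  qed
next
  fix c assume "c \<in> ?Step \<union> ?Zero"
  then obtain i x where "c = sigma2_column Q S i x"
  proof
    assume "c \<in> ?Step"
    then obtain i j where "c = (\<lambda>n. prod_encode (i, if j \<le> n then 1 else 0))"
      by blast
    then have "c = sigma2_column Q S i (2 * j)"
      by (simp add: sigma2_column_def fun_eq_iff)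
    then show thesis
      using that by blast
  next
    assume "c \<in> ?Zero"
    then obtain i s where "c = (\<lambda>n. prod_encode (i, 0))" "\<forall>t. \<not> Q i s t S"
      by blast
    then have "c = sigma2_column Q S i (2 * s + 1)"
      by (simp add: sigma2_column_def fun_eq_iff)
    then show thesis
      using that by blast
  qed
  then show "c \<in> range (case_prod (sigma2_column Q S))"
    by (metis case_prod_conv rangeI)
qed

lemma E_set_sigma2_code_iff:
  fixes Q :: "nat \<Rightarrow> nat \<Rightarrow> nat \<Rightarrow> 'a \<Rightarrow> bool"
  shows "E_set (sigma2_code Q S) (sigma2_code Q S') \<longleftrightarrow>
     (\<forall>i. (\<exists>s. \<forall>t. \<not> Q i s t S) \<longleftrightarrow> (\<exists>s. \<forall>t. \<not> Q i s t S'))"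
proof -
  define Step :: "(nat \<Rightarrow> nat) set" where
    "Step = {\<lambda>n. prod_encode (i, if j \<le> n then 1 else 0) | i j. True}"
  define Zero :: "'a \<Rightarrow> (nat \<Rightarrow> nat) set" where "Zero S = {\<lambda>n. prod_encode (i, 0) | i. \<exists>s. \<forall>t. \<not> Q i s t S}" for S
  have const_in_Zero: "(\<lambda>n. prod_encode (i, 0)) \<in> Zero S \<longleftrightarrow> (\<exists>s. \<forall>t. \<not> Q i s t S)" for i S
    unfolding Zero_def by (auto simp: fun_eq_iff prod_encode_eq)
  have "Zero S \<inter> Step = {}" for S
    unfolding Zero_def Step_def by (auto simp: fun_eq_iff prod_encode_eq)
  then have "Step \<union> Zero S = Step \<union> Zero S' \<longleftrightarrow> Zero S = Zero S'"
    by blast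
  also have "\<dots> \<longleftrightarrow> (\<forall>i. (\<exists>s. \<forall>t. \<not> Q i s t S) \<longleftrightarrow> (\<exists>s. \<forall>t. \<not> Q i s t S'))"
    using const_in_Zero unfolding Zero_def by blast
  finally show ?thesis
    unfolding E_set_def columns_sigma2_code range_sigma2_column Step_def Zero_def .
qed

lemma continuous_sigma2_code:
  assumes "\<And>i s t. finitely_determined X (Q i s t)"
  shows "continuous_map (subtopology cantor_top X) baire_top (sigma2_code Q)"
proof (rule continuous_map_cantor_baire)
  fix p
  obtain m n i x where p: "prod_decode p = (m, n)" "prod_decode m = (i, x)"
    by (metis surj_pair)
  have "finitely_determined X (\<lambda>S. \<exists>t\<le>n. Q i (x div 2) t S)"
    by (rule finitely_determined_bounded_ex) (rule assms)
  then have "finitely_determined X (\<lambda>S. sigma2_column Q S i x n)"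
    unfolding sigma2_column_def by (rule finitely_determined_comp)
  then show "finitely_determined X (\<lambda>S. sigma2_code Q S p)"
    by (simp add: sigma2_code_def p)
qed

lemma Eset_learnable_if_iso_iff_Sigma2:
  fixes Q :: "nat \<Rightarrow> nat \<Rightarrow> nat \<Rightarrow> struc \<Rightarrow> bool"
  assumes "\<And>i s t. finitely_determined (LD sig K) (Q i s t)"
    and "\<And>S S'. S \<in> LD sig K \<Longrightarrow> S' \<in> LD sig K \<Longrightarrow>
      iso S S' \<longleftrightarrow> (\<forall>i. (\<exists>s. \<forall>t. \<not> Q i s t S) \<longleftrightarrow> (\<exists>s. \<forall>t. \<not> Q i s t S'))"
  shows "Eset_learnable sig K"
  unfolding Eset_learnable_def
proof (intro exI conjI ballI)
  show "continuous_map (subtopology cantor_top (LD sig K)) baire_top (sigma2_code Q)"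
    by (rule continuous_sigma2_code) (rule assms(1))
  fix S S' assume "S \<in> LD sig K" "S' \<in> LD sig K"
  then show "iso S S' \<longleftrightarrow> E_set (sigma2_code Q S) (sigma2_code Q S')"
    by (simp add: assms(2) E_set_sigma2_code_iff)
qed

lemma finitely_determined_restr: "finitely_determined {S. is_struc sig S} (\<lambda>S. restr S t)"
  unfolding finitely_determined_def
proof (intro exI conjI ballI impI)
  let ?F = "SIGMA j:{..<length sig}. {xs. set xs \<subseteq> {0..t} \<and> length xs = sig ! j}"
  show "finite ?F"
    by (intro finite_SigmaI finite_lists_length_eq) auto
  fix S S' assume "S \<in> {S. is_struc sig S}" "S' \<in> {S. is_struc sig S}"
    and agree: "\<forall>a\<in>?F. S a = S' a"
  then have S: "is_struc sig S" "is_struc sig S'"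
    by simp_all
  show "restr S t = restr S' t"
  proof (rule ext, clarify)
    fix j xs
    show "restr S t (j, xs) = restr S' t (j, xs)"
    proof (cases "(j, xs) \<in> ?F")
      case True
      then have "S (j, xs) = S' (j, xs)"
        using agree by blast
      then show ?thesis
        unfolding restr_def by simp
    next
      case False
      then show ?thesis
        using S unfolding restr_def is_struc_def by auto
    qed
  qed
qed

lemma iso_iff_iso_same_members:
  assumes "S \<in> LD sig K"
  shows "iso S S' \<longleftrightarrow> (\<forall>A\<in>K. iso A S \<longleftrightarrow> iso A S')"
proof
  assume "\<forall>A\<in>K. iso A S \<longleftrightarrow> iso A S'"
  moreover obtain A where "A \<in> K" "iso S A"
    using assms unfolding LD_def by blast
  ultimately show "iso S S'"
    using iso_sym iso_trans by blast
qed (use iso_sym iso_trans in blast)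

lemma finite_nat_Collect_iff: "finite {n::nat. P n} \<longleftrightarrow> (\<exists>s. \<forall>t. \<not> (s < t \<and> P t))"
  unfolding finite_nat_set_iff_bounded_le by (auto simp: not_less)

lemma PL_learnable_imp_Eset_learnable:
  assumes "family sig K" and "PL_learnable sig K"
  shows "Eset_learnable sig K"
proof -
  obtain M where M: "\<forall>S\<in>LD sig K. \<forall>A\<in>K. infinite {n. M (restr S n) = Some A} \<longleftrightarrow> iso A S"
    using assms(2) unfolding PL_learnable_def by blast
  define Q where "Q i s t S \<longleftrightarrow> s < t \<and> M (restr S t) = Some (from_nat_into K i)" for i s t S
  show ?thesis
  proof (rule Eset_learnable_if_iso_iff_Sigma2)
    fix i s t
    have "finitely_determined {S. is_struc sig S} (Q i s t)"
      unfolding Q_def by (rule finitely_determined_comp[OF finitely_determined_restr])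
    then show "finitely_determined (LD sig K) (Q i s t)"
      by (rule finitely_determined_subset) (auto simp: LD_def)
  next
    fix S S' assume S: "S \<in> LD sig K" and S': "S' \<in> LD sig K"
    then have "K \<noteq> {}"
      unfolding LD_def by blast
    then have K: "range (from_nat_into K) = K"
      using assms(1) unfolding family_def by simp
    have Q_iff: "(\<exists>s. \<forall>t. \<not> Q i s t T) \<longleftrightarrow> \<not> iso (from_nat_into K i) T" if "T \<in> LD sig K" for i T
      using M that from_nat_into[OF \<open>K \<noteq> {}\<close>]
      unfolding Q_def finite_nat_Collect_iff[symmetric] by blast
    have "(\<forall>i. (\<exists>s. \<forall>t. \<not> Q i s t S) \<longleftrightarrow> (\<exists>s. \<forall>t. \<not> Q i s t S')) \<longleftrightarrow>
        (\<forall>A\<in>range (from_nat_into K). iso A S \<longleftrightarrow> iso A S')"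
      using Q_iff[OF S] Q_iff[OF S'] by auto
    then show "iso S S' \<longleftrightarrow> (\<forall>i. (\<exists>s. \<forall>t. \<not> Q i s t S) \<longleftrightarrow> (\<exists>s. \<forall>t. \<not> Q i s t S'))"
      using iso_iff_iso_same_members[OF S] K by simp
  qed
qed

definition order_of :: "(nat \<Rightarrow> int) \<Rightarrow> struc" where
  "order_of g = (\<lambda>(i, xs). i = 0 \<and> length xs = 2 \<and> g (xs ! 0) < g (xs ! 1))"

lemma is_struc_order_of: "is_struc [2] (order_of g)"
  unfolding is_struc_def order_of_def by simp

lemma order_of_add_const: "order_of (\<lambda>x. g x + c) = order_of g"
  unfolding order_of_def by simp

lemma iso_order_of:
  assumes "inj g" "inj h" "range g = range h"
  shows "iso (order_of g) (order_of h)"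
proof -
  let ?f = "inv h \<circ> g"
  have "bij_betw ?f UNIV UNIV"
    using bij_betw_trans[OF inj_on_imp_bij_betw[OF assms(1)]] bij_betw_inv_into[OF inj_on_imp_bij_betw[OF assms(2)]]
    by (simp add: assms(3))
  moreover have hf: "h (inv h (g x)) = g x" for x
    using assms(3) by (metis f_inv_into_f rangeI)
  have "order_of g (i, xs) = order_of h (i, map ?f xs)" for i xs
    by (cases "length xs = 2") (simp_all add: order_of_def hf)
  ultimately show ?thesis
    unfolding iso_def bij_def by blast
qed

definition has_least :: "struc \<Rightarrow> bool" where
  "has_least S \<longleftrightarrow> (\<exists>s. \<forall>t. t \<noteq> s \<longrightarrow> S (0, [s, t]))"

lemma has_least_iso:
  assumes "iso S T" "has_least S"
  shows "has_least T"
proof -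
  obtain f where f: "bij f" "\<forall>i xs. S (i, xs) = T (i, map f xs)"
    using assms(1) unfolding iso_def by blast
  obtain s where s: "\<forall>t. t \<noteq> s \<longrightarrow> S (0, [s, t])"
    using assms(2) unfolding has_least_def by blast
  have "T (0, [f s, t])" if "t \<noteq> f s" for t
  proof -
    have ft: "f (inv f t) = t"
      using f(1) by (simp add: bij_is_surj surj_f_inv_f)
    then have "inv f t \<noteq> s"
      using that by auto
    then have "S (0, [s, inv f t])"
      using s by blast
    moreover have "S (0, [s, inv f t]) = T (0, map f [s, inv f t])"
      using f(2) by blast
    ultimately show ?thesis
      using ft by simp
  qed
  then show ?thesis
    unfolding has_least_def by blast
qed

definition omega_order :: struc where
  "omega_order = order_of int"

definition zeta_order :: struc where
  "zeta_order = order_of int_decode"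

lemma has_least_omega_order: "has_least omega_order"
  unfolding has_least_def omega_order_def order_of_def by (intro exI[of _ 0]) simp

lemma not_has_least_zeta_order: "\<not> has_least zeta_order"
proof
  assume "has_least zeta_order"
  then obtain s where s: "\<forall>t. t \<noteq> s \<longrightarrow> int_decode s < int_decode t"
    unfolding has_least_def zeta_order_def order_of_def by auto
  define t where "t = int_encode (int_decode s - 1)"
  have t: "int_decode t = int_decode s - 1"
    unfolding t_def by simp
  then have "t \<noteq> s"
    by auto
  then show False
    using s t by fastforce
qed

lemma not_iso_omega_zeta: "\<not> iso omega_order zeta_order"
  using has_least_iso has_least_omega_order not_has_least_zeta_order by blast

definition rank_in :: "nat set \<Rightarrow> nat \<Rightarrow> nat" where
  "rank_in N x = card {y \<in> N. y < x}"

lemma rank_in_less: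
  assumes "x \<in> N" "x < z"
  shows "rank_in N x < rank_in N z"
proof -
  have "{y \<in> N. y < x} \<subset> {y \<in> N. y < z}"
    using assms by auto
  moreover have "finite {y \<in> N. y < z}"
    by simp
  ultimately show ?thesis
    unfolding rank_in_def by (rule psubset_card_mono[rotated])
qed

lemma inj_on_rank_in: "inj_on (rank_in N) N"
  by (rule inj_onI) (metis linorder_neqE_nat less_irrefl rank_in_less)

lemma rank_in_image_finite:
  assumes "finite N"
  shows "rank_in N ` N = {..<card N}"
proof (rule card_subset_eq)
  have "rank_in N x < card N" if "x \<in> N" for x
  proof -
    have "{y \<in> N. y < x} \<subset> N"
      using that by auto
    then show ?thesis
      unfolding rank_in_def using assms by (rule psubset_card_mono[rotated])
  qed
  then show "rank_in N ` N \<subseteq> {..<card N}"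
    by auto
  show "card (rank_in N ` N) = card {..<card N}"
    using card_image[OF inj_on_rank_in] by simp
qed simp

lemma rank_in_enumerate:
  assumes "infinite N"
  shows "rank_in N (enumerate N n) = n"
proof -
  have "{y \<in> N. y < enumerate N n} = enumerate N ` {..<n}"
  proof (intro equalityI subsetI)
    fix y assume "y \<in> {y \<in> N. y < enumerate N n}"
    moreover obtain k where "enumerate N k = y"
      using enumerate_Ex[OF assms] calculation by blast
    ultimately show "y \<in> enumerate N ` {..<n}"
      using assms by auto
  qed (use assms enumerate_in_set in auto)
  then show ?thesis
    unfolding rank_in_def using card_image inj_enumerate[OF assms] inj_on_subset
    by (metis card_lessThan subset_UNIV)
qed

definition signed_rank :: "nat set \<Rightarrow> nat \<Rightarrow> int" where
  "signed_rank N x = (if x \<in> N then - int (rank_in N x) - 1 else int (rank_in (- N) x))"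

lemma inj_signed_rank: "inj (signed_rank N)"
proof (rule injI)
  fix x z assume eq: "signed_rank N x = signed_rank N z"
  then have "x \<in> N \<longleftrightarrow> z \<in> N"
    unfolding signed_rank_def by (auto split: if_splits)
  then show "x = z"
    using eq inj_onD[OF inj_on_rank_in, of N x z] inj_onD[OF inj_on_rank_in, of "- N" x z]
    unfolding signed_rank_def by (auto split: if_splits)
qed

lemma range_signed_rank_infinite:
  assumes "infinite N" "infinite (- N)"
  shows "range (signed_rank N) = UNIV"
proof -
  have "z \<in> range (signed_rank N)" for z
  proof (cases "z \<ge> 0")
    case True
    let ?x = "enumerate (- N) (nat z)"
    have "signed_rank N ?x = z"
      using True enumerate_in_set[OF assms(2)] rank_in_enumerate[OF assms(2)]
      unfolding signed_rank_def by simp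
    then show ?thesis
      by (metis rangeI)
  next
    case False
    let ?x = "enumerate N (nat (- z - 1))"
    have "signed_rank N ?x = z"
      using False enumerate_in_set[OF assms(1)] rank_in_enumerate[OF assms(1)]
      unfolding signed_rank_def by simp
    then show ?thesis
      by (metis rangeI)
  qed
  then show ?thesis
    by blast
qed

lemma range_signed_rank_finite:
  assumes "finite N"
  shows "range (\<lambda>x. signed_rank N x + int (card N)) = range int"
proof (intro equalityI subsetI)
  fix z assume "z \<in> range (\<lambda>x. signed_rank N x + int (card N))"
  then obtain x where z: "z = signed_rank N x + int (card N)"
    by blast
  have "x \<in> N \<Longrightarrow> rank_in N x < card N"
    using rank_in_image_finite[OF assms] by blast
  then have "z \<ge> 0"
    unfolding z signed_rank_def by auto
  then show "z \<in> range int"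
    by (metis nonneg_int_cases rangeI)
next
  fix z assume "z \<in> range int"
  then obtain k where z: "z = int k"
    by blast
  have co: "infinite (- N)"
    using assms by (simp add: Compl_eq_Diff_UNIV Diff_infinite_finite)
  show "z \<in> range (\<lambda>x. signed_rank N x + int (card N))"
  proof (cases "k < card N")
    case True
    then have "card N - 1 - k \<in> rank_in N ` N"
      using rank_in_image_finite[OF assms] by simp
    then obtain x where "x \<in> N" "rank_in N x = card N - 1 - k"
      by (elim imageE) simp
    then have "signed_rank N x + int (card N) = z"
      unfolding z signed_rank_def using True by simp
    then show ?thesis
      by (metis rangeI)
  next
    case False
    let ?x = "enumerate (- N) (k - card N)"
    have "signed_rank N ?x + int (card N) = z"
      using False enumerate_in_set[OF co] rank_in_enumerate[OF co]
      unfolding z signed_rank_def by simp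
    then show ?thesis
      by (metis rangeI)
  qed
qed

lemma iso_omega_order_if_finite:
  assumes "finite N"
  shows "iso (order_of (signed_rank N)) omega_order"
proof -
  have "inj (\<lambda>x. signed_rank N x + int (card N))"
    using inj_signed_rank by (simp add: inj_def)
  then have "iso (order_of (\<lambda>x. signed_rank N x + int (card N))) (order_of int)"
    using iso_order_of inj_of_nat range_signed_rank_finite[OF assms] by blast
  then show ?thesis
    unfolding omega_order_def order_of_add_const .
qed

lemma iso_zeta_order_if_infinite:
  assumes "infinite N" "infinite (- N)"
  shows "iso (order_of (signed_rank N)) zeta_order"
  unfolding zeta_order_def
  using iso_order_of inj_signed_rank inj_int_decode range_signed_rank_infinite[OF assms] surj_int_decode
  by metis

lemma signed_rank_cong:
  assumes "\<forall>y\<le>x. y \<in> N \<longleftrightarrow> y \<in> N'"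
  shows "signed_rank N x = signed_rank N' x"
proof -
  have "{y \<in> N. y < x} = {y \<in> N'. y < x}" "{y \<in> - N. y < x} = {y \<in> - N'. y < x}"
    using assms by auto
  then show ?thesis
    unfolding signed_rank_def rank_in_def using assms by auto
qed

lemma restr_order_of_signed_rank_cong:
  assumes "\<forall>y\<le>n. y \<in> N \<longleftrightarrow> y \<in> N'"
  shows "restr (order_of (signed_rank N)) n = restr (order_of (signed_rank N')) n"
proof (rule ext, clarify)
  fix i and xs :: "nat list"
  show "restr (order_of (signed_rank N)) n (i, xs) = restr (order_of (signed_rank N')) n (i, xs)"
  proof (cases "length xs = 2 \<and> set xs \<subseteq> {0..n}")
    case True
    then have "xs ! 0 \<le> n" "xs ! 1 \<le> n"
      by (auto simp: subset_iff)
    then have "signed_rank N (xs ! j) = signed_rank N' (xs ! j)" if "j \<in> {0, 1}" for j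
      using that signed_rank_cong assms by (metis le_trans insertE singletonD)
    then show ?thesis
      unfolding restr_def order_of_def by simp
  next
    case False
    then show ?thesis
      unfolding restr_def order_of_def by auto
  qed
qed

definition next_witness :: "(nat set \<Rightarrow> nat \<Rightarrow> bool) \<Rightarrow> nat set \<Rightarrow> nat" where
  "next_witness P F = (LEAST n. (\<forall>y\<in>F. y < n) \<and> P F n)"

(* Adding the successor of the new witness rather than the witness itself keeps all witnesses
   outside the limit set, so that it is coinfinite. *)
primrec witness_stage :: "(nat set \<Rightarrow> nat \<Rightarrow> bool) \<Rightarrow> nat \<Rightarrow> nat set" where
  "witness_stage P 0 = {}"
| "witness_stage P (Suc k) = insert (Suc (next_witness P (witness_stage P k))) (witness_stage P k)"

lemma next_witness_spec:
  assumes "finite F" "infinite {n. P F n}"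
  shows "(\<forall>y\<in>F. y < next_witness P F) \<and> P F (next_witness P F)"
proof -
  obtain m where "\<forall>y\<in>F. y \<le> m"
    using assms(1) finite_nat_set_iff_bounded_le by blast
  moreover obtain n where "n > m" "P F n"
    using assms(2) unfolding infinite_nat_iff_unbounded by blast
  ultimately have "(\<forall>y\<in>F. y < n) \<and> P F n"
    by force
  then show ?thesis
    unfolding next_witness_def by (rule LeastI)
qed

lemma gap_sequence_initial_segment:
  fixes c :: "nat \<Rightarrow> nat"
  assumes gap: "\<And>k. Suc (c k) < c (Suc k)" and "y \<le> c k"
  shows "y \<in> range (\<lambda>i. Suc (c i)) \<longleftrightarrow> y \<in> (\<lambda>i. Suc (c i)) ` {..<k}"
proof
  assume "y \<in> range (\<lambda>i. Suc (c i))"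
  then obtain i where i: "y = Suc (c i)"
    by blast
  have "strict_mono c"
    using gap by (intro strict_monoI_Suc) (meson Suc_lessD)
  then have "i < k"
    using i assms(2) by (metis Suc_le_lessD strict_mono_less)
  then show "y \<in> (\<lambda>i. Suc (c i)) ` {..<k}"
    using i by blast
qed blast

lemma gap_sequence_not_in_range:
  fixes c :: "nat \<Rightarrow> nat"
  assumes gap: "\<And>k. Suc (c k) < c (Suc k)"
  shows "c k \<notin> range (\<lambda>i. Suc (c i))"
proof
  assume "c k \<in> range (\<lambda>i. Suc (c i))"
  then obtain i where i: "c k = Suc (c i)"
    by blast
  have mono: "strict_mono c"
    using gap by (intro strict_monoI_Suc) (meson Suc_lessD)
  show False
  proof (cases "i < k")
    case True
    then have "c (Suc i) \<le> c k"
      using mono by (simp add: strict_mono_less_eq)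
    then show False
      using gap[of i] i by simp
  next
    case False
    then have "c k \<le> c i"
      using mono by (simp add: strict_mono_less_eq)
    then show False
      using i by simp
  qed
qed

lemma exists_infinite_coinfinite_frequently:
  fixes P :: "nat set \<Rightarrow> nat \<Rightarrow> bool"
  assumes local: "\<And>N N' n. \<forall>y\<le>n. y \<in> N \<longleftrightarrow> y \<in> N' \<Longrightarrow> P N n = P N' n"
    and frequent: "\<And>F. finite F \<Longrightarrow> infinite {n. P F n}"
  shows "\<exists>N. infinite N \<and> infinite (- N) \<and> infinite {n. P N n}"
proof -
  define c where "c k = next_witness P (witness_stage P k)" for k
  have stage: "witness_stage P k = (\<lambda>i. Suc (c i)) ` {..<k}" for k
    unfolding c_def by (induction k) (auto simp: lessThan_Suc)
  have c: "(\<forall>y\<in>witness_stage P k. y < c k) \<and> P (witness_stage P k) (c k)" for k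
  proof -
    have "finite (witness_stage P k)"
      unfolding stage by simp
    then show ?thesis
      unfolding c_def using next_witness_spec frequent by blast
  qed
  have gap: "Suc (c k) < c (Suc k)" for k
    using c[of "Suc k"] unfolding c_def by simp
  then have "strict_mono c"
    by (intro strict_monoI_Suc) (meson Suc_lessD)
  define N where "N = range (\<lambda>i. Suc (c i))"
  have "P N (c k)" for k
  proof -
    have "\<forall>y\<le>c k. y \<in> N \<longleftrightarrow> y \<in> witness_stage P k"
      unfolding N_def stage using gap_sequence_initial_segment[of c, OF gap] by blast
    then show ?thesis
      using local c by blast
  qed
  then have "range c \<subseteq> {n. P N n}"
    by blast
  moreover have "range c \<subseteq> - N"
    using gap_sequence_not_in_range[of c, OF gap] unfolding N_def by auto
  moreover have "infinite (range c)"
    using \<open>strict_mono c\<close> by (simp add: range_inj_infinite strict_mono_imp_inj_on)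
  moreover have "infinite N"
    unfolding N_def using \<open>strict_mono c\<close>
    by (intro range_inj_infinite) (simp add: inj_def strict_mono_eq)
  ultimately show ?thesis
    using infinite_super by blast
qed

definition omega_zeta :: "struc set" where
  "omega_zeta = {omega_order, zeta_order}"

lemma family_omega_zeta: "family [2] omega_zeta"
  unfolding family_def omega_zeta_def
  using not_iso_omega_zeta iso_sym is_struc_order_of
  by (auto simp: omega_order_def zeta_order_def)

lemma order_of_in_LD_omega_zeta:
  "iso (order_of g) A \<Longrightarrow> A \<in> omega_zeta \<Longrightarrow> order_of g \<in> LD [2] omega_zeta"
  unfolding LD_def using is_struc_order_of by blast

lemma iso_iff_has_least_omega_zeta:
  assumes "S \<in> LD [2] omega_zeta" "S' \<in> LD [2] omega_zeta"
  shows "iso S S' \<longleftrightarrow> (has_least S \<longleftrightarrow> has_least S')"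
proof
  assume "iso S S'"
  then show "has_least S \<longleftrightarrow> has_least S'"
    using has_least_iso iso_sym by blast
next
  assume same: "has_least S \<longleftrightarrow> has_least S'"
  have "has_least T \<longleftrightarrow> iso T omega_order" and "\<not> has_least T \<longleftrightarrow> iso T zeta_order"
    if "T \<in> LD [2] omega_zeta" for T
    using that has_least_iso iso_sym has_least_omega_order not_has_least_zeta_order
    unfolding LD_def omega_zeta_def by blast+
  then show "iso S S'"
    using assms same iso_sym iso_trans by metis
qed

lemma Eset_learnable_omega_zeta: "Eset_learnable [2] omega_zeta"
proof -
  define Q :: "nat \<Rightarrow> nat \<Rightarrow> nat \<Rightarrow> struc \<Rightarrow> bool" where
    "Q i s t S \<longleftrightarrow> t \<noteq> s \<and> \<not> S (0, [s, t])" for i s t S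
  have "(\<exists>s. \<forall>t. \<not> Q i s t T) \<longleftrightarrow> has_least T" for i T
    unfolding Q_def has_least_def by blast
  then show ?thesis
  proof (intro Eset_learnable_if_iso_iff_Sigma2[where Q = Q])
    show "finitely_determined (LD [2] omega_zeta) (Q i s t)" for i s t
      unfolding finitely_determined_def Q_def by (intro exI[of _ "{(0, [s, t])}"]) simp
  qed (simp add: iso_iff_has_least_omega_zeta)
qed

lemma not_PL_learnable_omega_zeta: "\<not> PL_learnable [2] omega_zeta"
proof
  assume "PL_learnable [2] omega_zeta"
  then obtain M where M: "\<forall>S\<in>LD [2] omega_zeta. \<forall>A\<in>omega_zeta.
      infinite {n. M (restr S n) = Some A} \<longleftrightarrow> iso A S"
    unfolding PL_learnable_def by blast
  have omega: "omega_order \<in> omega_zeta" and zeta: "zeta_order \<in> omega_zeta"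
    unfolding omega_zeta_def by simp_all
  let ?P = "\<lambda>N n. M (restr (order_of (signed_rank N)) n) = Some omega_order"
  have "infinite {n. ?P F n}" if "finite F" for F
    using M omega iso_omega_order_if_finite[OF that] iso_sym order_of_in_LD_omega_zeta by blast
  then obtain N where N: "infinite N" "infinite (- N)" "infinite {n. ?P N n}"
    using exists_infinite_coinfinite_frequently[of ?P] restr_order_of_signed_rank_cong by metis
  have zeta_N: "iso (order_of (signed_rank N)) zeta_order"
    using iso_zeta_order_if_infinite[OF N(1,2)] .
  then have "iso omega_order (order_of (signed_rank N))"
    using M N(3) omega zeta order_of_in_LD_omega_zeta by blast
  then show False
    using zeta_N iso_trans not_iso_omega_zeta by blast
qed

theorem mainTheorem20:
  shows "(\<forall>sig K. family sig K \<and> finite K \<and> PL_learnable sig K \<longrightarrow> Eset_learnable sig K) \<and>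
         (\<exists>sig K. family sig K \<and> finite K \<and> Eset_learnable sig K \<and> \<not> PL_learnable sig K)"
proof
  show "\<forall>sig K. family sig K \<and> finite K \<and> PL_learnable sig K \<longrightarrow> Eset_learnable sig K"
    using PL_learnable_imp_Eset_learnable by blast
  have "finite omega_zeta"
    unfolding omega_zeta_def by simp
  then show "\<exists>sig K. family sig K \<and> finite K \<and> Eset_learnable sig K \<and> \<not> PL_learnable sig K"
    using family_omega_zeta Eset_learnable_omega_zeta not_PL_learnable_omega_zeta by blast
qed

end
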